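(* Let $P$ be a minimal Fano polytope in $\mathbb{R}^3$ with vertex set $\{x_1,x_2,x_3,y_1,-y_1\}$ such that $x_1,x_2,x_3$ are the vertices of a Fano triangle. Then, up to the action of $GL(3,\mathbb{Z})$, $P$ is the convex hull of either $\{(1,0,0),(0,1,0),(-1,-1,0),(0,0,1),(0,0,-1)\}$ or $\{(1,0,0),(0,1,0),(-1,-1,0),(1,2,3),(-1,-2,-3)\}$.
   Context: A Fano polytope is a convex polytope $P\subset\mathbb{R}^3$ with vertices in $\mathbb{Z}^3$ such that the only lattice point of $P$ that is not a vertex is the origin, which lies strictly in the interior of $P$. A Fano polytope with vertex set $\{x_1,\ldots,x_k\}$ is minimal if for every $j$ the convex hull of $\{x_1,\ldots,x_k\}\setminus\{x_j\}$ is not a Fano polytope. A Fano triangle is a triangle with vertices in $\mathbb{Z}^3$ lying in a plane through the origin, whose only lattice point other than its vertices is the origin, which lies in its relative interior. *)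

theory Defs
  imports "HOL-Analysis.Analysis"
begin

definition lattice_pt :: "real^3 \<Rightarrow> bool" where
  "lattice_pt x \<longleftrightarrow> (\<forall>i. x $ i \<in> \<int>)"

definition vertices :: "(real^3) set \<Rightarrow> (real^3) set" where
  "vertices P = {v. v extreme_point_of P}"

definition fano_polytope :: "(real^3) set \<Rightarrow> bool" where
  "fano_polytope P \<longleftrightarrow>
     polytope P \<and> (\<forall>v\<in>vertices P. lattice_pt v) \<and> 0 \<in> interior P \<and>
     {x \<in> P. lattice_pt x} = insert 0 (vertices P)"

definition fano_triangle :: "real^3 \<Rightarrow> real^3 \<Rightarrow> real^3 \<Rightarrow> bool" where
  "fano_triangle a b c \<longleftrightarrow>
     lattice_pt a \<and> lattice_pt b \<and> lattice_pt c \<and> \<not> collinear {a, b, c} \<and>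
     0 \<in> affine hull {a, b, c} \<and>
     0 \<in> rel_interior (convex hull {a, b, c}) \<and>
     {x \<in> convex hull {a, b, c}. lattice_pt x} = {a, b, c, 0}"

definition GL3Z :: "(real^3^3) set" where
  "GL3Z = {M. (\<forall>i j. M $ i $ j \<in> \<int>) \<and> \<bar>det M\<bar> = 1}"

end

(*
  Since 0 lies in the relative interior of the Fano triangle, some positive combination of
  x1, x2, x3 vanishes, and no triangle {0, xi, xj} contains a further lattice point. Hence any
  two of the xi form a basis of the lattice of their plane; this makes the ratios of the weights
  integers, so the weights are equal and x1 + x2 + x3 = 0. Extend x1, x2 to a lattice basis
  x1, x2, z and write y1 = a x1 + b x2 + c z; c is nonzero because P has interior, and replacing
  y1 by -y1 makes it positive. A lattice point at height g, 0 < |g| < c, lies in P as soon as its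
  coordinates satisfy the linear inequalities of the slice of P at height g/c, so the Fano
  property excludes all of them. Testing suitable points at heights -1, 1 and 3 forces c = 1, or
  c = 3 with (a, b) = (1, 2) or (2, 1) mod 3. A shear of z then makes y1 = z or
  y1 = x1 + 2 x2 + 3 z, and the matrix sending x1, x2, z to the standard basis lies in GL(3, Z).
*)

theory Submission
  imports Defs
begin

unbundle cross3_syntax

lemma lattice_pt_add: "lattice_pt u \<Longrightarrow> lattice_pt v \<Longrightarrow> lattice_pt (u + v)"
  by (simp add: lattice_pt_def)

lemma lattice_pt_diff: "lattice_pt u \<Longrightarrow> lattice_pt v \<Longrightarrow> lattice_pt (u - v)"
  by (simp add: lattice_pt_def)

lemma lattice_pt_scaleR: "a \<in> \<int> \<Longrightarrow> lattice_pt u \<Longrightarrow> lattice_pt (a *\<^sub>R u)"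
  by (simp add: lattice_pt_def)

lemma lattice_pt_cross: "lattice_pt u \<Longrightarrow> lattice_pt v \<Longrightarrow> lattice_pt (u \<times> v)"
  by (simp add: lattice_pt_def forall_3 cross_components)

lemma lattice_pt_axis: "lattice_pt (axis i 1)"
  by (simp add: lattice_pt_def axis_def)

lemma weighted_sum_zero_solve:
  fixes a b c :: "'a::real_vector"
  assumes "\<gamma> \<noteq> 0" and "\<alpha> *\<^sub>R a + \<beta> *\<^sub>R b + \<gamma> *\<^sub>R c = 0"
  shows "c = (- \<alpha> / \<gamma>) *\<^sub>R a + (- \<beta> / \<gamma>) *\<^sub>R b"
proof -
  have "\<gamma> *\<^sub>R c = - \<alpha> *\<^sub>R a - \<beta> *\<^sub>R b"
    using assms(2) by (simp add: algebra_simps eq_neg_iff_add_eq_0)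
  then have "(1 / \<gamma>) *\<^sub>R (\<gamma> *\<^sub>R c) = (1 / \<gamma>) *\<^sub>R (- \<alpha> *\<^sub>R a - \<beta> *\<^sub>R b)"
    by simp
  then show ?thesis
    using assms(1) by (simp add: algebra_simps divide_inverse_commute)
qed

lemma cross_coords_unique:
  fixes u v :: "real^3"
  assumes uv: "u \<times> v \<noteq> 0" and eq: "s *\<^sub>R u + t *\<^sub>R v = s' *\<^sub>R u + t' *\<^sub>R v"
  shows "s = s' \<and> t = t'"
proof -
  have "\<And>s t. (s *\<^sub>R u + t *\<^sub>R v) \<times> v = s *\<^sub>R (u \<times> v)"
    "\<And>s t. u \<times> (s *\<^sub>R u + t *\<^sub>R v) = t *\<^sub>R (u \<times> v)"
    by (simp_all add: cross_add_left cross_add_right cross_mult_left cross_mult_right)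
  then have "s *\<^sub>R (u \<times> v) = s' *\<^sub>R (u \<times> v)" "t *\<^sub>R (u \<times> v) = t' *\<^sub>R (u \<times> v)"
    using eq by metis+
  then show ?thesis
    using uv by simp
qed

lemma triangle_vertex_coords:
  fixes u v :: "real^3"
  assumes "u \<times> v \<noteq> 0" and "s *\<^sub>R u + t *\<^sub>R v \<in> {0, u, v}"
  shows "s = 0 \<and> t = 0 \<or> s = 1 \<and> t = 0 \<or> s = 0 \<and> t = 1"
  using assms(2) cross_coords_unique[OF assms(1), of s t 0 0]
    cross_coords_unique[OF assms(1), of s t 1 0] cross_coords_unique[OF assms(1), of s t 0 1]
  by auto

lemma lattice_coords_in_empty_triangle:
  fixes u v :: "real^3"
  assumes uv: "u \<times> v \<noteq> 0" and lu: "lattice_pt u" and lv: "lattice_pt v"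
    and empty: "{q \<in> convex hull {0, u, v}. lattice_pt q} \<subseteq> {0, u, v}"
    and lp: "lattice_pt (s *\<^sub>R u + t *\<^sub>R v)"
  shows "s \<in> \<int> \<and> t \<in> \<int>"
proof -
  have vertex: "\<sigma> = 0 \<and> \<tau> = 0 \<or> \<sigma> = 1 \<and> \<tau> = 0 \<or> \<sigma> = 0 \<and> \<tau> = 1"
    if "0 \<le> \<sigma>" "0 \<le> \<tau>" "\<sigma> + \<tau> \<le> 1" "lattice_pt (\<sigma> *\<^sub>R u + \<tau> *\<^sub>R v)" for \<sigma> \<tau>
  proof (rule triangle_vertex_coords[OF uv])
    have "\<sigma> *\<^sub>R u + \<tau> *\<^sub>R v \<in> convex hull {0, u, v}"
      unfolding convex_hull_3_alt using that by force
    then show "\<sigma> *\<^sub>R u + \<tau> *\<^sub>R v \<in> {0, u, v}"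
      using empty that(4) by blast
  qed
  define s' t' where "s' = frac s" and "t' = frac t"
  have s': "0 \<le> s'" "s' < 1" and t': "0 \<le> t'" "t' < 1"
    by (simp_all add: s'_def t'_def frac_lt_1)
  have "s' *\<^sub>R u + t' *\<^sub>R v = (s *\<^sub>R u + t *\<^sub>R v) - (of_int \<lfloor>s\<rfloor> *\<^sub>R u + of_int \<lfloor>t\<rfloor> *\<^sub>R v)"
    by (simp add: s'_def t'_def frac_def algebra_simps)
  then have lq: "lattice_pt (s' *\<^sub>R u + t' *\<^sub>R v)"
    by (simp add: lattice_pt_diff lattice_pt_add lattice_pt_scaleR lp lu lv)
  have "s' = 0 \<and> t' = 0"
  proof (cases "s' + t' \<le> 1")
    case True
    then show ?thesis
      using vertex[OF s'(1) t'(1) True lq] s' t' by linarith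
  next
    case False
    \<comment> \<open>reflect in the midpoint of \<open>u\<close> and \<open>v\<close>\<close>
    have "(1 - s') *\<^sub>R u + (1 - t') *\<^sub>R v = (u + v) - (s' *\<^sub>R u + t' *\<^sub>R v)"
      by (simp add: algebra_simps)
    then have "lattice_pt ((1 - s') *\<^sub>R u + (1 - t') *\<^sub>R v)"
      by (simp add: lattice_pt_diff lattice_pt_add lq lu lv)
    from vertex[OF _ _ _ this] show ?thesis
      using False s' t' by linarith
  qed
  then show ?thesis
    by (simp add: s'_def t'_def)
qed

lemma fano_triangle_rotate: "fano_triangle a b c \<Longrightarrow> fano_triangle b c a"
  unfolding fano_triangle_def by (simp add: insert_commute)

lemma fano_triangle_weights:
  assumes "fano_triangle a b c"
  obtains \<alpha> \<beta> \<gamma> :: real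
  where "0 < \<alpha>" "0 < \<beta>" "0 < \<gamma>" "\<alpha> *\<^sub>R a + \<beta> *\<^sub>R b + \<gamma> *\<^sub>R c = 0"
proof -
  have nc: "\<not> collinear {a, b, c}" and ri: "0 \<in> rel_interior (convex hull {a, b, c})"
    using assms by (auto simp: fano_triangle_def)
  have dist: "a \<noteq> b" "a \<noteq> c" "b \<noteq> c" and ad: "\<not> affine_dependent {a, b, c}"
    using nc collinear_3_eq_affine_dependent by blast+
  obtain w where w: "\<forall>x\<in>{a, b, c}. 0 < w x" "(\<Sum>x\<in>{a, b, c}. w x *\<^sub>R x) = 0"
    using ri unfolding rel_interior_convex_hull_explicit[OF ad] by auto
  show thesis
    by (rule that[of "w a" "w b" "w c"]) (use w dist in \<open>auto simp: add.assoc\<close>)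
qed

lemma fano_triangle_cross_nonzero:
  assumes T: "fano_triangle a b c"
  shows "a \<times> b \<noteq> 0"
proof
  assume "a \<times> b = 0"
  then have "collinear (affine hull {0, a, b})"
    by (subst collinear_affine_hull_collinear) (simp add: cross_eq_0)
  moreover have "affine hull {0, a, b} = span {a, b}"
    by (simp add: affine_hull_span_0 hull_inc)
  moreover obtain \<alpha> \<beta> \<gamma> where "0 < \<gamma>" and w: "\<alpha> *\<^sub>R a + \<beta> *\<^sub>R b + \<gamma> *\<^sub>R c = 0"
    using fano_triangle_weights[OF T] by metis
  have "c = (- \<alpha> / \<gamma>) *\<^sub>R a + (- \<beta> / \<gamma>) *\<^sub>R b"
    by (rule weighted_sum_zero_solve[OF _ w]) (use \<open>0 < \<gamma>\<close> in simp)
  then have "c \<in> span {a, b}"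
    by (metis span_add span_base span_scale insertI1 insertI2 singletonI)
  then have "{a, b, c} \<subseteq> span {a, b}"
    by (blast intro: span_base)
  ultimately have "collinear {a, b, c}"
    by (metis collinear_subset)
  with T show False
    by (simp add: fano_triangle_def)
qed

lemma fano_triangle_lattice_coords:
  assumes T: "fano_triangle a b c" and lp: "lattice_pt (s *\<^sub>R a + t *\<^sub>R b)"
  shows "s \<in> \<int> \<and> t \<in> \<int>"
proof (rule lattice_coords_in_empty_triangle[OF fano_triangle_cross_nonzero[OF T] _ _ _ lp])
  show "lattice_pt a" "lattice_pt b"
    using T by (simp_all add: fano_triangle_def)
  have zero: "0 \<in> convex hull {a, b, c}"
    and LP: "{x \<in> convex hull {a, b, c}. lattice_pt x} = {a, b, c, 0}"
    using T rel_interior_subset by (auto simp: fano_triangle_def)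
  obtain \<alpha> \<beta> \<gamma> where w: "0 < \<alpha>" "0 < \<gamma>" "\<alpha> *\<^sub>R a + \<beta> *\<^sub>R b + \<gamma> *\<^sub>R c = 0"
    using fano_triangle_weights[OF T] by metis
  have "c \<notin> convex hull {0, a, b}"
  proof
    assume "c \<in> convex hull {0, a, b}"
    then obtain \<sigma> \<tau> where "0 \<le> \<sigma>" "c = \<sigma> *\<^sub>R a + \<tau> *\<^sub>R b"
      unfolding convex_hull_3_alt by auto
    moreover have "c = (- \<alpha> / \<gamma>) *\<^sub>R a + (- \<beta> / \<gamma>) *\<^sub>R b"
      by (rule weighted_sum_zero_solve[OF _ w(3)]) (use w in simp)
    ultimately have "\<sigma> = - \<alpha> / \<gamma>"
      using cross_coords_unique[OF fano_triangle_cross_nonzero[OF T]] by metis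
    moreover have "0 < \<alpha> / \<gamma>"
      using w by simp
    ultimately show False
      using \<open>0 \<le> \<sigma>\<close> by linarith
  qed
  moreover have "convex hull {0, a, b} \<subseteq> convex hull {a, b, c}"
    by (rule hull_minimal) (use zero in \<open>auto intro: hull_inc\<close>)
  ultimately show "{q \<in> convex hull {0, a, b}. lattice_pt q} \<subseteq> {0, a, b}"
    using LP by blast
qed

lemma fano_triangle_weight_ratios:
  assumes T: "fano_triangle a b c" and "\<gamma> \<noteq> 0" and w: "\<alpha> *\<^sub>R a + \<beta> *\<^sub>R b + \<gamma> *\<^sub>R c = 0"
  shows "\<alpha> / \<gamma> \<in> \<int>" "\<beta> / \<gamma> \<in> \<int>"
proof -
  have "c = (- \<alpha> / \<gamma>) *\<^sub>R a + (- \<beta> / \<gamma>) *\<^sub>R b"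
    by (rule weighted_sum_zero_solve[OF assms(2) w])
  moreover have "lattice_pt c"
    using T by (simp add: fano_triangle_def)
  ultimately have "- \<alpha> / \<gamma> \<in> \<int>" "- \<beta> / \<gamma> \<in> \<int>"
    using fano_triangle_lattice_coords[OF T] by metis+
  then show "\<alpha> / \<gamma> \<in> \<int>" "\<beta> / \<gamma> \<in> \<int>"
    by (simp_all add: minus_in_Ints_iff)
qed

lemma fano_triangle_sum_zero:
  assumes T: "fano_triangle a b c"
  shows "a + b + c = 0"
proof -
  obtain \<alpha> \<beta> \<gamma> where pos: "0 < \<alpha>" "0 < \<beta>" "0 < \<gamma>" and w: "\<alpha> *\<^sub>R a + \<beta> *\<^sub>R b + \<gamma> *\<^sub>R c = 0"
    using fano_triangle_weights[OF T] by metis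
  have "\<beta> *\<^sub>R b + \<gamma> *\<^sub>R c + \<alpha> *\<^sub>R a = 0" "\<gamma> *\<^sub>R c + \<alpha> *\<^sub>R a + \<beta> *\<^sub>R b = 0"
    using w by (simp_all add: algebra_simps)
  then have "\<alpha> / \<gamma> \<in> \<int>" "\<beta> / \<gamma> \<in> \<int>" "\<gamma> / \<alpha> \<in> \<int>" "\<gamma> / \<beta> \<in> \<int>"
    using fano_triangle_weight_ratios[OF T _ w] pos
      fano_triangle_weight_ratios[OF fano_triangle_rotate[OF T]]
      fano_triangle_weight_ratios[OF fano_triangle_rotate[OF fano_triangle_rotate[OF T]]]
    by simp_all
  then have "1 \<le> \<alpha> / \<gamma>" "1 \<le> \<gamma> / \<alpha>" "1 \<le> \<beta> / \<gamma>" "1 \<le> \<gamma> / \<beta>"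
    using pos Ints_nonzero_abs_ge1 by (metis abs_of_pos divide_pos_pos less_irrefl)+
  then have "\<alpha> = \<gamma>" "\<beta> = \<gamma>"
    using pos by (simp_all add: field_simps)
  then have "\<gamma> *\<^sub>R (a + b + c) = 0"
    using w by (simp add: algebra_simps)
  then show ?thesis
    using pos by simp
qed

definition det3 :: "real^3 \<Rightarrow> real^3 \<Rightarrow> real^3 \<Rightarrow> real" where
  "det3 u v w =
     u$1 * (v$2 * w$3 - v$3 * w$2) - u$2 * (v$1 * w$3 - v$3 * w$1) + u$3 * (v$1 * w$2 - v$2 * w$1)"

lemma det3_add:
  "det3 (x + y) v w = det3 x v w + det3 y v w"
  "det3 u (x + y) w = det3 u x w + det3 u y w"
  "det3 u v (x + y) = det3 u v x + det3 u v y"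
  by (simp_all add: det3_def algebra_simps)

lemma det3_scaleR:
  "det3 (c *\<^sub>R x) v w = c * det3 x v w"
  "det3 u (c *\<^sub>R x) w = c * det3 u x w"
  "det3 u v (c *\<^sub>R x) = c * det3 u v x"
  by (simp_all add: det3_def algebra_simps)

lemma det3_eq_cross_inner: "det3 u v w = (u \<times> v) \<bullet> w"
  by (simp add: det3_def cross3_def inner_vec_def sum_3 algebra_simps)

lemma det3_cramer:
  assumes "det3 u v w \<noteq> 0"
  shows "p = (det3 p v w / det3 u v w) *\<^sub>R u + (det3 u p w / det3 u v w) *\<^sub>R v
           + (det3 u v p / det3 u v w) *\<^sub>R w"
proof -
  have "det3 u v w *\<^sub>R p = det3 p v w *\<^sub>R u + det3 u p w *\<^sub>R v + det3 u v p *\<^sub>R w"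
    by (simp add: vec_eq_iff forall_3 det3_def algebra_simps)
  then show ?thesis
    using assms by (simp add: vec_eq_iff forall_3 field_simps)
qed

definition det3_coords :: "real^3 \<Rightarrow> real^3 \<Rightarrow> real^3 \<Rightarrow> real^3 \<Rightarrow> real^3" where
  "det3_coords u v w p =
     vector [det3 p v w / det3 u v w, det3 u p w / det3 u v w, det3 u v p / det3 u v w]"

lemma det3_coords_comb:
  assumes "det3 u v w \<noteq> 0"
  shows "det3_coords u v w (a *\<^sub>R u + b *\<^sub>R v + c *\<^sub>R w) = vector [a, b, c]"
proof -
  have "det3 (a *\<^sub>R u + b *\<^sub>R v + c *\<^sub>R w) v w = a * det3 u v w"
    "det3 u (a *\<^sub>R u + b *\<^sub>R v + c *\<^sub>R w) w = b * det3 u v w"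
    "det3 u v (a *\<^sub>R u + b *\<^sub>R v + c *\<^sub>R w) = c * det3 u v w"
    by (simp_all add: det3_def algebra_simps)
  then show ?thesis
    using assms by (simp add: det3_coords_def)
qed

lemma linear_det3_coords: "linear (det3_coords u v w)"
  by (rule linearI) (simp_all add: det3_coords_def det3_add det3_scaleR vec_eq_iff forall_3
      add_divide_distrib)

lemma Ints_det:
  fixes A :: "real^'n^'n"
  assumes "\<And>i j. A $ i $ j \<in> \<int>"
  shows "det A \<in> \<int>"
  unfolding det_def by (intro Ints_sum Ints_mult Ints_prod Ints_of_int assms)

definition lattice_basis :: "real^3 \<Rightarrow> real^3 \<Rightarrow> real^3 \<Rightarrow> bool" where
  "lattice_basis u v w \<longleftrightarrow> det3 u v w \<noteq> 0 \<and> lattice_pt u \<and> lattice_pt v \<and> lattice_pt w \<and>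
     (\<forall>p. lattice_pt p \<longrightarrow> (\<exists>a b c :: int. p = of_int a *\<^sub>R u + of_int b *\<^sub>R v + of_int c *\<^sub>R w))"

lemma lattice_basis_coords:
  assumes "lattice_basis u v w" and "lattice_pt p"
  obtains a b c :: int where "p = of_int a *\<^sub>R u + of_int b *\<^sub>R v + of_int c *\<^sub>R w"
  using assms by (auto simp: lattice_basis_def)

lemma lattice_inner_gcd_witness:
  assumes "lattice_pt n" and "n \<noteq> 0"
  obtains z where "lattice_pt z" "n \<bullet> z \<noteq> 0" "\<And>p. lattice_pt p \<Longrightarrow> (n \<bullet> p) / (n \<bullet> z) \<in> \<int>"
proof -
  obtain m1 m2 m3 :: int where m: "n$1 = of_int m1" "n$2 = of_int m2" "n$3 = of_int m3"
    using assms(1) unfolding lattice_pt_def by (metis Ints_cases)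
  have inner: "n \<bullet> p = of_int m1 * p$1 + of_int m2 * p$2 + of_int m3 * p$3" for p
    by (simp add: inner_vec_def sum_3 m)
  define g where "g = gcd (gcd m1 m2) m3"
  have "g \<noteq> 0"
    using assms(2) by (auto simp: g_def vec_eq_iff forall_3 m)
  obtain r1 r2 where r12: "r1 * m1 + r2 * m2 = gcd m1 m2"
    using bezout_int by blast
  obtain r3 r4 where r34: "r3 * gcd m1 m2 + r4 * m3 = g"
    using bezout_int g_def by blast
  define z :: "real^3" where "z = vector [of_int (r3 * r1), of_int (r3 * r2), of_int r4]"
  have "n \<bullet> z = of_int (r3 * (r1 * m1 + r2 * m2) + r4 * m3)"
    by (simp add: inner z_def algebra_simps)
  then have nz: "n \<bullet> z = of_int g"
    using r12 r34 by simp
  have "g dvd m1" "g dvd m2" "g dvd m3"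
    unfolding g_def by (meson dvd_trans gcd_dvd1 gcd_dvd2)+
  then have "(n \<bullet> p) / (n \<bullet> z)
      = of_int (m1 div g) * p$1 + of_int (m2 div g) * p$2 + of_int (m3 div g) * p$3" for p
    unfolding nz unfolding inner using \<open>g \<noteq> 0\<close> by (simp add: add_divide_distrib of_int_div)
  then have "(n \<bullet> p) / (n \<bullet> z) \<in> \<int>" if "lattice_pt p" for p
    using that by (simp add: lattice_pt_def)
  moreover have "lattice_pt z"
    by (simp add: lattice_pt_def z_def forall_3)
  ultimately show thesis
    using that \<open>g \<noteq> 0\<close> nz by simp
qed

lemma lattice_basis_extend:
  assumes lu: "lattice_pt u" and lv: "lattice_pt v" and uv: "u \<times> v \<noteq> 0"
    and plane: "\<And>s t. lattice_pt (s *\<^sub>R u + t *\<^sub>R v) \<Longrightarrow> s \<in> \<int> \<and> t \<in> \<int>"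
  obtains w where "lattice_basis u v w"
proof -
  \<comment> \<open>\<open>z\<close> realises the gcd of the entries of \<open>u \<times> v\<close> as the volume \<open>det3 u v z\<close>\<close>
  obtain z where lz: "lattice_pt z" and D: "det3 u v z \<noteq> 0"
    and div: "\<And>p. lattice_pt p \<Longrightarrow> det3 u v p / det3 u v z \<in> \<int>"
    using lattice_inner_gcd_witness[OF lattice_pt_cross[OF lu lv] uv]
    unfolding det3_eq_cross_inner by metis
  have "\<exists>a b c :: int. p = of_int a *\<^sub>R u + of_int b *\<^sub>R v + of_int c *\<^sub>R z"
    if lp: "lattice_pt p" for p
  proof -
    define \<gamma> where "\<gamma> = det3 u v p / det3 u v z"
    define q where "q = p - \<gamma> *\<^sub>R z"
    have \<gamma>: "\<gamma> \<in> \<int>"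
      using div[OF lp] by (simp add: \<gamma>_def)
    have "det3 u v q = det3 u v p - \<gamma> * det3 u v z"
      by (simp add: q_def det3_def algebra_simps)
    then have "det3 u v q = 0"
      using D by (simp add: \<gamma>_def)
    then have q: "q = (det3 q v z / det3 u v z) *\<^sub>R u + (det3 u q z / det3 u v z) *\<^sub>R v"
      using det3_cramer[OF D, of q] by simp
    moreover have "lattice_pt q"
      unfolding q_def by (intro lattice_pt_diff lattice_pt_scaleR \<gamma> lp lz)
    ultimately have "det3 q v z / det3 u v z \<in> \<int>" "det3 u q z / det3 u v z \<in> \<int>"
      using plane by metis+
    then obtain a b c :: int where ab: "det3 q v z / det3 u v z = of_int a"
      "det3 u q z / det3 u v z = of_int b" and "\<gamma> = of_int c"
      using \<gamma> by (metis Ints_cases)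
    from q have "p - of_int c *\<^sub>R z = of_int a *\<^sub>R u + of_int b *\<^sub>R v"
      unfolding ab by (simp add: q_def \<open>\<gamma> = of_int c\<close>)
    then have "p = of_int a *\<^sub>R u + of_int b *\<^sub>R v + of_int c *\<^sub>R z"
      by (simp add: diff_eq_eq)
    then show ?thesis
      by blast
  qed
  then have "lattice_basis u v z"
    using D lu lv lz by (simp add: lattice_basis_def)
  then show thesis
    by (rule that)
qed

lemma lattice_basis_shear:
  assumes "lattice_basis u v w"
  shows "lattice_basis u v (of_int k1 *\<^sub>R u + of_int k2 *\<^sub>R v + w)"
proof -
  define w' where "w' = of_int k1 *\<^sub>R u + of_int k2 *\<^sub>R v + w"
  have "det3 u v w' = det3 u v w"
    by (simp add: w'_def det3_def algebra_simps)
  moreover have "\<exists>a b c :: int. p = of_int a *\<^sub>R u + of_int b *\<^sub>R v + of_int c *\<^sub>R w'"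
    if lp: "lattice_pt p" for p
  proof -
    obtain a b c :: int where "p = of_int a *\<^sub>R u + of_int b *\<^sub>R v + of_int c *\<^sub>R w"
      using lattice_basis_coords[OF assms lp] .
    then have "p = of_int (a - c * k1) *\<^sub>R u + of_int (b - c * k2) *\<^sub>R v + of_int c *\<^sub>R w'"
      by (simp add: w'_def algebra_simps)
    then show ?thesis
      by blast
  qed
  moreover have "lattice_pt w'"
    using assms by (simp add: w'_def lattice_basis_def lattice_pt_add lattice_pt_scaleR)
  ultimately show ?thesis
    using assms by (simp add: lattice_basis_def flip: w'_def)
qed

lemma lattice_basis_swap:
  assumes "lattice_basis u v w"
  shows "lattice_basis v u w"
proof -
  have "det3 v u w = - det3 u v w"
    by (simp add: det3_def algebra_simps)
  moreover have "\<exists>a b c :: int. p = of_int a *\<^sub>R v + of_int b *\<^sub>R u + of_int c *\<^sub>R w"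
    if lp: "lattice_pt p" for p
  proof -
    obtain a b c :: int where "p = of_int a *\<^sub>R u + of_int b *\<^sub>R v + of_int c *\<^sub>R w"
      using lattice_basis_coords[OF assms lp] .
    then show ?thesis
      by (metis add.commute)
  qed
  ultimately show ?thesis
    using assms by (simp add: lattice_basis_def)
qed

lemma Ints_mult_eq_1_abs:
  fixes x y :: real
  assumes "x \<in> \<int>" "y \<in> \<int>" "x * y = 1"
  shows "\<bar>x\<bar> = 1"
proof -
  obtain m n :: int where "x = of_int m" "y = of_int n"
    using assms(1,2) by (metis Ints_cases)
  with assms(3) have "m * n = 1"
    by (metis of_int_eq_1_iff of_int_mult)
  with \<open>x = of_int m\<close> show ?thesis
    using zmult_eq_1_iff by auto
qed

lemma lattice_basis_det3_coords:
  assumes "lattice_basis u v w" and "lattice_pt p"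
  shows "lattice_pt (det3_coords u v w p)"
proof -
  obtain a b c :: int where "p = of_int a *\<^sub>R u + of_int b *\<^sub>R v + of_int c *\<^sub>R w"
    using lattice_basis_coords[OF assms] .
  then show ?thesis
    using assms(1) by (simp add: det3_coords_comb lattice_basis_def lattice_pt_def forall_3)
qed

lemma lattice_basis_GL3Z:
  assumes B: "lattice_basis u v w"
  obtains M where "M \<in> GL3Z" "M *v u = vector [1, 0, 0]" "M *v v = vector [0, 1, 0]"
    "M *v w = vector [0, 0, 1]"
proof -
  have D: "det3 u v w \<noteq> 0"
    using B by (simp add: lattice_basis_def)
  define M where "M = matrix (det3_coords u v w)"
  have Mv: "M *v p = det3_coords u v w p" for p
    by (simp add: M_def matrix_works linear_det3_coords)
  have M_Ints: "M $ i $ j \<in> \<int>" for i j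
    using lattice_basis_det3_coords[OF B lattice_pt_axis[of j]]
    by (simp add: M_def matrix_def lattice_pt_def)
  define A :: "real^3^3" where "A = transpose (vector [u, v, w])"
  have A_Ints: "A $ i $ j \<in> \<int>" for i j
    using B exhaust_3[of j] by (auto simp: A_def transpose_def lattice_basis_def lattice_pt_def)
  have "(M ** A) *v x = mat 1 *v x" for x
  proof -
    have "A *v x = x$1 *\<^sub>R u + x$2 *\<^sub>R v + x$3 *\<^sub>R w"
      by (simp add: A_def transpose_def matrix_vector_mult_def sum_3 vec_eq_iff algebra_simps)
    then have "M *v (A *v x) = vector [x$1, x$2, x$3]"
      by (simp add: Mv det3_coords_comb[OF D])
    then show ?thesis
      by (simp add: matrix_vector_mul_assoc[symmetric] vec_eq_iff forall_3)
  qed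
  then have "det M * det A = 1"
    by (metis matrix_eq det_I det_mul)
  moreover have "det M \<in> \<int>" "det A \<in> \<int>"
    by (simp_all add: Ints_det M_Ints A_Ints)
  ultimately have "\<bar>det M\<bar> = 1"
    by (metis Ints_mult_eq_1_abs)
  then have "M \<in> GL3Z"
    using M_Ints by (simp add: GL3Z_def)
  moreover have "M *v u = vector [1, 0, 0]" "M *v v = vector [0, 1, 0]" "M *v w = vector [0, 0, 1]"
    using det3_coords_comb[OF D, of 1 0 0] det3_coords_comb[OF D, of 0 1 0]
      det3_coords_comb[OF D, of 0 0 1]
    by (simp_all add: Mv)
  ultimately show thesis
    using that by blast
qed

lemma convex_comb4_mem:
  fixes C :: "'a::real_vector set"
  assumes "convex C" "a \<in> C" "b \<in> C" "c \<in> C" "d \<in> C"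
    and "0 \<le> p" "0 \<le> q" "0 \<le> r" "0 \<le> s" "p + q + r + s = 1"
  shows "p *\<^sub>R a + q *\<^sub>R b + r *\<^sub>R c + s *\<^sub>R d \<in> C"
proof -
  let ?wt = "\<lambda>i::nat. if i = 0 then p else if i = 1 then q else if i = 2 then r else s"
  let ?pt = "\<lambda>i::nat. if i = 0 then a else if i = 1 then b else if i = 2 then c else d"
  have "(\<Sum>i\<in>{0, 1, 2, 3}. ?wt i *\<^sub>R ?pt i) \<in> C"
    by (rule convex_sum) (use assms in auto)
  then show ?thesis
    by (simp add: algebra_simps)
qed

text \<open>The bipyramid over the triangle \<open>u, v, -u-v\<close> with apexes \<open>\<plusminus>y\<close>, in the
  coordinates \<open>(s, t, \<lambda>) = (S/k, T/k, g/k)\<close> of the point \<open>s u + t v + \<lambda> y\<close>.\<close>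

lemma convex_bipyramid_mem:
  fixes C :: "'a::real_vector set"
  assumes C: "convex C" "u \<in> C" "v \<in> C" "- u - v \<in> C" "y \<in> C" "- y \<in> C"
    and k: "0 < k" and h: "S + T \<le> k - \<bar>g\<bar>" "T - 2 * S \<le> k - \<bar>g\<bar>" "S - 2 * T \<le> k - \<bar>g\<bar>"
  shows "(S / k) *\<^sub>R u + (T / k) *\<^sub>R v + (g / k) *\<^sub>R y \<in> C"
proof -
  define y' where "y' = (if 0 \<le> g then y else - y)"
  have "y' \<in> C" and gy: "(g / k) *\<^sub>R y = (\<bar>g\<bar> / k) *\<^sub>R y'"
    using C by (simp_all add: y'_def)
  define p q r where "p = (2 * S - T + k - \<bar>g\<bar>) / (3 * k)" and "q = (2 * T - S + k - \<bar>g\<bar>) / (3 * k)"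
    and "r = (k - \<bar>g\<bar> - S - T) / (3 * k)"
  have pr: "p - r = S / k" and qr: "q - r = T / k"
    using k by (simp_all add: p_def q_def r_def field_simps)
  have "(S / k) *\<^sub>R u + (T / k) *\<^sub>R v + (g / k) *\<^sub>R y
      = p *\<^sub>R u + q *\<^sub>R v + r *\<^sub>R (- u - v) + (\<bar>g\<bar> / k) *\<^sub>R y'"
    by (simp add: gy algebra_simps flip: pr qr)
  also have "\<dots> \<in> C"
    by (rule convex_comb4_mem[OF C(1-4) \<open>y' \<in> C\<close>])
       (use h k in \<open>simp_all add: p_def q_def r_def field_simps\<close>)
  finally show ?thesis .
qed

lemma lattice_basis_bipyramid_image:
  assumes "lattice_basis u v w"
  obtains M where "M \<in> GL3Z"
    "(\<lambda>x. M *v x) ` (convex hull {u, v, - u - v, \<alpha> *\<^sub>R u + \<beta> *\<^sub>R v + \<gamma> *\<^sub>R w,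
                                  - (\<alpha> *\<^sub>R u + \<beta> *\<^sub>R v + \<gamma> *\<^sub>R w)})
      = convex hull {vector [1, 0, 0], vector [0, 1, 0], vector [- 1, - 1, 0],
                     vector [\<alpha>, \<beta>, \<gamma>], vector [- \<alpha>, - \<beta>, - \<gamma>]}"
proof -
  obtain M where M: "M \<in> GL3Z" "M *v u = vector [1, 0, 0]" "M *v v = vector [0, 1, 0]"
    "M *v w = vector [0, 0, 1]"
    using lattice_basis_GL3Z[OF assms] .
  have lin: "linear (\<lambda>x. M *v x)"
    by (rule matrix_vector_mul_linear)
  define Y where "Y = \<alpha> *\<^sub>R u + \<beta> *\<^sub>R v + \<gamma> *\<^sub>R w"
  have "M *v Y = vector [\<alpha>, \<beta>, \<gamma>]"
    by (simp add: Y_def M linear_add[OF lin] linear_scale[OF lin] vec_eq_iff forall_3)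
  moreover have "- vector [1, 0, 0] - vector [0, 1, 0] = (vector [- 1, - 1, 0] :: real^3)"
    "- vector [\<alpha>, \<beta>, \<gamma>] = (vector [- \<alpha>, - \<beta>, - \<gamma>] :: real^3)"
    by (simp_all add: vec_eq_iff forall_3)
  ultimately have "(\<lambda>x. M *v x) ` {u, v, - u - v, Y, - Y} = {vector [1, 0, 0], vector [0, 1, 0],
      vector [- 1, - 1, 0], vector [\<alpha>, \<beta>, \<gamma>], vector [- \<alpha>, - \<beta>, - \<gamma>]}"
    using M(2,3) by (simp add: linear_diff[OF lin] linear_neg[OF lin])
  then show thesis
    using that[OF M(1)] by (simp add: convex_hull_linear_image[OF lin] Y_def)
qed

text \<open>With \<open>S = c \<alpha> - g a\<close> and \<open>T = c \<beta> - g b\<close>, \<open>in_bipyramid_scaled c S T g\<close> is the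
  criterion of \<open>convex_bipyramid_mem\<close> for the lattice point \<open>\<alpha> u + \<beta> v + g w\<close> to lie in the
  bipyramid with apex \<open>y = a u + b v + c w\<close>.\<close>

definition in_bipyramid_scaled :: "int \<Rightarrow> int \<Rightarrow> int \<Rightarrow> int \<Rightarrow> bool" where
  "in_bipyramid_scaled k S T g \<longleftrightarrow> S + T \<le> k - \<bar>g\<bar> \<and> T - 2 * S \<le> k - \<bar>g\<bar> \<and> S - 2 * T \<le> k - \<bar>g\<bar>"

lemma apex_coords_change:
  fixes u v w y :: "'a::real_vector"
  assumes c: "c \<noteq> 0" and y: "y = a *\<^sub>R u + b *\<^sub>R v + c *\<^sub>R w"
  shows "\<alpha> *\<^sub>R u + \<beta> *\<^sub>R v + g *\<^sub>R w
    = ((c * \<alpha> - g * a) / c) *\<^sub>R u + ((c * \<beta> - g * b) / c) *\<^sub>R v + (g / c) *\<^sub>R y"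
proof -
  define t where "t = g / c"
  have "g = t * c" "(c * \<alpha> - g * a) / c = \<alpha> - t * a" "(c * \<beta> - g * b) / c = \<beta> - t * b"
    using c by (simp_all add: t_def field_simps)
  moreover have "\<alpha> *\<^sub>R u + \<beta> *\<^sub>R v + (t * c) *\<^sub>R w = (\<alpha> - t * a) *\<^sub>R u + (\<beta> - t * b) *\<^sub>R v + t *\<^sub>R y"
    by (simp add: y algebra_simps)
  ultimately show ?thesis
    by (simp add: t_def)
qed

lemma bipyramid_lattice_slices:
  assumes B: "lattice_basis u v w" and c: "0 < c"
    and y: "y = of_int a *\<^sub>R u + of_int b *\<^sub>R v + of_int c *\<^sub>R w"
    and LP: "{p \<in> convex hull {u, v, - u - v, y, - y}. lattice_pt p} \<subseteq> {0, u, v, - u - v, y, - y}"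
    and g: "0 < \<bar>g\<bar>" "\<bar>g\<bar> < c"
  shows "\<not> in_bipyramid_scaled c (c * \<alpha> - g * a) (c * \<beta> - g * b) g"
proof
  define S T where "S = c * \<alpha> - g * a" and "T = c * \<beta> - g * b"
  assume "in_bipyramid_scaled c (c * \<alpha> - g * a) (c * \<beta> - g * b) g"
  then have "S + T \<le> c - \<bar>g\<bar>" "T - 2 * S \<le> c - \<bar>g\<bar>" "S - 2 * T \<le> c - \<bar>g\<bar>"
    by (simp_all add: in_bipyramid_scaled_def S_def T_def)
  then have h: "real_of_int S + of_int T \<le> of_int c - \<bar>of_int g\<bar>"
    "real_of_int T - 2 * of_int S \<le> of_int c - \<bar>of_int g\<bar>"
    "real_of_int S - 2 * of_int T \<le> of_int c - \<bar>of_int g\<bar>"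
    by (metis of_int_le_iff of_int_add of_int_diff of_int_mult of_int_abs of_int_numeral)+
  define p where "p = of_int \<alpha> *\<^sub>R u + of_int \<beta> *\<^sub>R v + of_int g *\<^sub>R w"
  have "lattice_pt p"
    using B by (simp add: p_def lattice_basis_def lattice_pt_add lattice_pt_scaleR)
  have "p = (of_int S / of_int c) *\<^sub>R u + (of_int T / of_int c) *\<^sub>R v + (of_int g / of_int c) *\<^sub>R y"
    unfolding p_def S_def T_def of_int_diff of_int_mult
    by (rule apex_coords_change) (use c y in simp_all)
  also have "\<dots> \<in> convex hull {u, v, - u - v, y, - y}"
    by (rule convex_bipyramid_mem) (use c h in \<open>simp_all add: hull_inc\<close>)
  finally have "p \<in> {0, u, v, - u - v, y, - y}"
    using LP \<open>lattice_pt p\<close> by blast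
  moreover have "det3 u v y = of_int c * det3 u v w"
    by (simp add: y det3_def algebra_simps)
  moreover have "det3 u v 0 = 0" "det3 u v u = 0" "det3 u v v = 0" "det3 u v (- u - v) = 0"
    "det3 u v (- y) = - det3 u v y"
    by (simp_all add: det3_def algebra_simps)
  ultimately have "det3 u v p / det3 u v w \<in> {0, of_int c, - of_int c}"
    using B by (auto simp: lattice_basis_def)
  moreover have "det3 u v p = of_int g * det3 u v w"
    by (simp add: p_def det3_def algebra_simps)
  ultimately have "real_of_int g \<in> {0, of_int c, - of_int c}"
    using B by (simp add: lattice_basis_def)
  then show False
    using g by auto
qed

lemma apex_classification_reduced:
  fixes a b c :: int
  assumes c: "2 \<le> c" and a: "0 \<le> a" "a < c" and b: "0 \<le> b" "b < c"
    and no_pt: "\<And>\<alpha> \<beta> g. 0 < \<bar>g\<bar> \<Longrightarrow> \<bar>g\<bar> < c \<Longrightarrow>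
      \<not> in_bipyramid_scaled c (c * \<alpha> - g * a) (c * \<beta> - g * b) g"
  shows "c = 3 \<and> (a = 1 \<and> b = 2 \<or> a = 2 \<and> b = 1)"
proof -
  have "c \<le> a + b"
    using no_pt[of "- 1" 0 0] c a b by (auto simp: in_bipyramid_scaled_def)
  moreover have "a + b \<le> c"
    using no_pt[of 1 1 1] c a b by (auto simp: in_bipyramid_scaled_def)
  ultimately have ab: "a + b = c"
    by simp
  have "3 * a = c \<or> 3 * a = 2 * c"
    using no_pt[of 1 0 0] no_pt[of 1 1 0] no_pt[of 1 0 1] ab c a b
    by (auto simp: in_bipyramid_scaled_def)
  then have "3 * a = c * (3 * a div c)" "3 * b = c * (3 * b div c)"
    using ab c by auto
  \<comment> \<open>otherwise the slice at height 3 contains the lattice point with \<open>S = T = 0\<close>\<close>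
  then have "\<not> 3 < c"
    using no_pt[of 3 "3 * a div c" "3 * b div c"] by (auto simp: in_bipyramid_scaled_def)
  with \<open>3 * a = c \<or> 3 * a = 2 * c\<close> ab c a show ?thesis
    by auto
qed

lemma apex_classification:
  fixes a b c :: int
  assumes c: "2 \<le> c"
    and no_pt: "\<And>\<alpha> \<beta> g. 0 < \<bar>g\<bar> \<Longrightarrow> \<bar>g\<bar> < c \<Longrightarrow>
      \<not> in_bipyramid_scaled c (c * \<alpha> - g * a) (c * \<beta> - g * b) g"
  shows "c = 3 \<and> (a mod 3 = 1 \<and> b mod 3 = 2 \<or> a mod 3 = 2 \<and> b mod 3 = 1)"
proof -
  have "c = 3 \<and> (a mod c = 1 \<and> b mod c = 2 \<or> a mod c = 2 \<and> b mod c = 1)"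
  proof (rule apex_classification_reduced[OF c])
    fix \<alpha> \<beta> g :: int
    assume "0 < \<bar>g\<bar>" "\<bar>g\<bar> < c"
    moreover have "c * \<alpha> - g * (a mod c) = c * (\<alpha> + g * (a div c)) - g * a"
      "c * \<beta> - g * (b mod c) = c * (\<beta> + g * (b div c)) - g * b"
      by (simp_all add: algebra_simps flip: minus_div_mult_eq_mod)
    ultimately show "\<not> in_bipyramid_scaled c (c * \<alpha> - g * (a mod c)) (c * \<beta> - g * (b mod c)) g"
      using no_pt by simp
  qed (use c in simp_all)
  then show ?thesis
    by auto
qed

lemma bipyramid_apex_123:
  assumes B: "lattice_basis u v w" and ab: "a mod 3 = 1" "b mod 3 = 2"
    and y: "y = of_int a *\<^sub>R u + of_int b *\<^sub>R v + 3 *\<^sub>R w"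
  shows "\<exists>M\<in>GL3Z. (\<lambda>x. M *v x) ` (convex hull {u, v, - u - v, y, - y})
    = convex hull {vector [1, 0, 0], vector [0, 1, 0], vector [- 1, - 1, 0],
                   vector [1, 2, 3], vector [- 1, - 2, - 3]}"
proof -
  define k1 k2 where "k1 = (a - 1) div 3" and "k2 = (b - 2) div 3"
  define w' where "w' = of_int k1 *\<^sub>R u + of_int k2 *\<^sub>R v + w"
  have "a = 3 * k1 + 1" "b = 3 * k2 + 2"
    using ab by (simp_all add: k1_def k2_def) presburger+
  then have "y = 1 *\<^sub>R u + 2 *\<^sub>R v + 3 *\<^sub>R w'"
    by (simp add: y w'_def algebra_simps)
  then show ?thesis
    using lattice_basis_bipyramid_image[OF lattice_basis_shear[OF B, of k1 k2], of 1 2 3]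
    unfolding w'_def[symmetric] by metis
qed

lemma bipyramid_normal_form_pos:
  assumes B: "lattice_basis u v w" and c: "0 < c"
    and y: "y = of_int a *\<^sub>R u + of_int b *\<^sub>R v + of_int c *\<^sub>R w"
    and LP: "{p \<in> convex hull {u, v, - u - v, y, - y}. lattice_pt p} \<subseteq> {0, u, v, - u - v, y, - y}"
  shows "\<exists>M\<in>GL3Z.
    (\<lambda>x. M *v x) ` (convex hull {u, v, - u - v, y, - y})
      = convex hull {vector [1, 0, 0], vector [0, 1, 0], vector [- 1, - 1, 0],
                     vector [0, 0, 1], vector [0, 0, - 1]}
    \<or> (\<lambda>x. M *v x) ` (convex hull {u, v, - u - v, y, - y})
      = convex hull {vector [1, 0, 0], vector [0, 1, 0], vector [- 1, - 1, 0],
                     vector [1, 2, 3], vector [- 1, - 2, - 3]}"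
proof -
  have no_pt: "\<And>\<alpha> \<beta> g. 0 < \<bar>g\<bar> \<Longrightarrow> \<bar>g\<bar> < c \<Longrightarrow>
      \<not> in_bipyramid_scaled c (c * \<alpha> - g * a) (c * \<beta> - g * b) g"
    using bipyramid_lattice_slices[OF B c y LP] by blast
  have "c = 1 \<or> 2 \<le> c"
    using c by linarith
  then consider "c = 1" | "c = 3" "a mod 3 = 1" "b mod 3 = 2" | "c = 3" "a mod 3 = 2" "b mod 3 = 1"
    using apex_classification[OF _ no_pt] by blast
  then show ?thesis
  proof cases
    case 1
    define w' where "w' = of_int a *\<^sub>R u + of_int b *\<^sub>R v + w"
    have "y = 0 *\<^sub>R u + 0 *\<^sub>R v + 1 *\<^sub>R w'"
      using y 1 by (simp add: w'_def)
    then obtain M where "M \<in> GL3Z" and img: "(\<lambda>x. M *v x) ` (convex hull {u, v, - u - v, y, - y})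
        = convex hull {vector [1, 0, 0], vector [0, 1, 0], vector [- 1, - 1, 0],
                       vector [0, 0, 1], vector [- 0, - 0, - 1]}"
      using lattice_basis_bipyramid_image[OF lattice_basis_shear[OF B, of a b], of 0 0 1]
      unfolding w'_def[symmetric] by metis
    then show ?thesis
      by (intro bexI[of _ M]) simp_all
  next
    case 2
    have "y = of_int a *\<^sub>R u + of_int b *\<^sub>R v + 3 *\<^sub>R w"
      using y 2 by simp
    then show ?thesis
      using bipyramid_apex_123[OF B 2(2,3)] by blast
  next
    case 3
    have "y = of_int b *\<^sub>R v + of_int a *\<^sub>R u + 3 *\<^sub>R w"
      using y 3 by (simp add: algebra_simps)
    note swapped = bipyramid_apex_123[OF lattice_basis_swap[OF B] 3(3,2) this]
    have "- v - u = - u - v"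
      by (simp add: algebra_simps)
    then have "{v, u, - v - u, y, - y} = {u, v, - u - v, y, - y}"
      by (metis insert_commute)
    then show ?thesis
      using swapped by auto
  qed
qed

lemma interior_convex_hull_in_hyperplane:
  fixes S :: "'a::euclidean_space set"
  assumes "n \<noteq> 0" and "S \<subseteq> {x. n \<bullet> x = 0}"
  shows "interior (convex hull S) = {}"
proof -
  have "convex hull S \<subseteq> {x. n \<bullet> x = 0}"
    by (rule hull_minimal[OF assms(2)]) (rule convex_hyperplane)
  then show ?thesis
    using interior_mono interior_hyperplane[OF assms(1)] by blast
qed

lemma lattice_bipyramid_normal_form:
  assumes B: "lattice_basis u v w" and ly: "lattice_pt y"
    and int: "0 \<in> interior (convex hull {u, v, - u - v, y, - y})"
    and LP: "{p \<in> convex hull {u, v, - u - v, y, - y}. lattice_pt p} \<subseteq> {0, u, v, - u - v, y, - y}"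
  shows "\<exists>M\<in>GL3Z.
    (\<lambda>x. M *v x) ` (convex hull {u, v, - u - v, y, - y})
      = convex hull {vector [1, 0, 0], vector [0, 1, 0], vector [- 1, - 1, 0],
                     vector [0, 0, 1], vector [0, 0, - 1]}
    \<or> (\<lambda>x. M *v x) ` (convex hull {u, v, - u - v, y, - y})
      = convex hull {vector [1, 0, 0], vector [0, 1, 0], vector [- 1, - 1, 0],
                     vector [1, 2, 3], vector [- 1, - 2, - 3]}"
proof -
  obtain a b c :: int where y: "y = of_int a *\<^sub>R u + of_int b *\<^sub>R v + of_int c *\<^sub>R w"
    using lattice_basis_coords[OF B ly] .
  have "c \<noteq> 0"
  proof
    \<comment> \<open>otherwise the bipyramid is flat\<close>
    assume "c = 0"
    have "det3 u v w \<noteq> 0"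
      using B by (simp add: lattice_basis_def)
    then have "u \<times> v \<noteq> 0"
      by (auto simp: det3_eq_cross_inner)
    moreover have "{u, v, - u - v, y, - y} \<subseteq> {x. (u \<times> v) \<bullet> x = 0}"
      using \<open>c = 0\<close> by (simp add: y det3_eq_cross_inner[symmetric] det3_def algebra_simps)
    ultimately show False
      using int interior_convex_hull_in_hyperplane by blast
  qed
  then consider "0 < c" | "0 < - c"
    by linarith
  then show ?thesis
  proof cases
    case 1
    then show ?thesis
      using bipyramid_normal_form_pos[OF B _ y LP] by blast
  next
    case 2
    have "- y = of_int (- a) *\<^sub>R u + of_int (- b) *\<^sub>R v + of_int (- c) *\<^sub>R w"
      using y by (simp add: algebra_simps)
    moreover have "{u, v, - u - v, - y, - (- y)} = {u, v, - u - v, y, - y}"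
      by auto
    ultimately show ?thesis
      using bipyramid_normal_form_pos[OF B 2, of "- y" "- a" "- b"] LP by simp
  qed
qed

theorem lemma4p4:
  fixes x1 x2 x3 y1 :: "real^3" and P :: "(real^3) set"
  assumes "fano_polytope P"
    and "vertices P = {x1, x2, x3, y1, -y1}"
    and "\<forall>v\<in>vertices P. \<not> fano_polytope (convex hull (vertices P - {v}))"
    and "fano_triangle x1 x2 x3"
  shows "\<exists>M\<in>GL3Z.
           (\<lambda>x. M *v x) ` P = convex hull {vector [1,0,0], vector [0,1,0], vector [-1,-1,0],
                                            vector [0,0,1], vector [0,0,-1]}
         \<or> (\<lambda>x. M *v x) ` P = convex hull {vector [1,0,0], vector [0,1,0], vector [-1,-1,0],
                                            vector [1,2,3], vector [-1,-2,-3]}"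
proof -
  have "polytope P" and lattice: "\<forall>v\<in>vertices P. lattice_pt v" and "0 \<in> interior P"
    and LP: "{x \<in> P. lattice_pt x} = insert 0 (vertices P)"
    using assms(1) by (auto simp: fano_polytope_def)
  have x3: "x3 = - x1 - x2"
    using fano_triangle_sum_zero[OF assms(4)] by (simp add: eq_neg_iff_add_eq_0 algebra_simps)
  have "P = convex hull (vertices P)"
    using Krein_Milman_Minkowski[OF polytope_imp_compact polytope_imp_convex] \<open>polytope P\<close>
    by (simp add: vertices_def)
  then have P: "P = convex hull {x1, x2, - x1 - x2, y1, - y1}"
    by (simp add: assms(2) x3)
  have "lattice_pt x1" "lattice_pt x2"
    using assms(4) by (simp_all add: fano_triangle_def)
  then obtain w where "lattice_basis x1 x2 w"
    using lattice_basis_extend fano_triangle_cross_nonzero[OF assms(4)]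
      fano_triangle_lattice_coords[OF assms(4)] by metis
  from lattice_bipyramid_normal_form[OF this, of y1, folded P] show ?thesis
    using lattice \<open>0 \<in> interior P\<close> LP by (simp add: assms(2) x3)
qed

end
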